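(* Let $X\in\mathbb{R}^{n\times d}$, $y\in\mathbb{R}^n$, and let $g:\mathbb{R}^d\to(-\infty,\infty]$ be a proper lower semicontinuous convex function with $g(k\beta)=kg(\beta)$ for all $k\ge0$, $\beta\in\mathbb{R}^d$, such that there exists $\beta\in\mathrm{relint}(\mathrm{dom}(g))$ and $P(\beta):=\frac12\|y-X\beta\|_2^2+g(\beta)$ attains its infimum. Let $f(z)=\frac12\|y-z\|_2^2$, so $-f^\star(-\theta)=-\frac12\|\theta\|_2^2+y^\top\theta$, let $D(\theta)=-f^\star(-\theta)-g^\star(X^\top\theta)$, and let $\hat\theta$ be a maximizer of $D$. For $\tilde\beta\in\mathbb{R}^d$ define \[ u^{\mathrm{GM}}(\theta;\tilde\beta)=\begin{cases}-f^\star(-\theta) & \text{if } -f^\star(-\theta)\le P(\tilde\beta),\\ -\infty & \text{if } -f^\star(-\theta)>P(\tilde\beta).\end{cases} \] Then for all $\tilde\beta\in\mathbb{R}^d$, $\tilde\theta\in\mathrm{dom}(D)$ and $\theta\in\mathbb{R}^n$ we have $D(\theta)\le u^{\mathrm{GM}}(\theta;\tilde\beta)$, and hence \[ \hat\theta\in\{\theta\mid l(\theta;\tilde\theta)\le u^{\mathrm{GM}}(\theta;\tilde\beta)\}=\{\theta\mid -f^\star(-\theta)\le P(\tilde\beta)\ \land\ (\tilde\theta-\theta)^\top(y-\theta)\le0\}, \] where $l(\theta;\tilde\theta)=\frac12\|\theta-\tilde\theta\|_2^2+D(\tilde\theta)$.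
   Context: $h^\star(v)=\sup_z v^\top z-h(z)$ is the Fenchel conjugate; $\mathrm{dom}(h)=\{z:|h(z)|<\infty\}$; $\mathrm{relint}$ is relative interior. *)

theory Defs
  imports "HOL-Analysis.Analysis"
begin

definition fconj :: "('a::real_inner \<Rightarrow> ereal) \<Rightarrow> 'a \<Rightarrow> ereal" where
  "fconj h v = (SUP z. ereal (v \<bullet> z) - h z)"

definition edom :: "('a \<Rightarrow> ereal) \<Rightarrow> 'a set" where
  "edom h = {z. \<bar>h z\<bar> < \<infinity>}"

definition eproper :: "('a \<Rightarrow> ereal) \<Rightarrow> bool" where
  "eproper h \<longleftrightarrow> (\<forall>z. h z \<noteq> -\<infinity>) \<and> (\<exists>z. h z \<noteq> \<infinity>)"

definition econvex :: "('a::real_vector \<Rightarrow> ereal) \<Rightarrow> bool" where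
  "econvex h \<longleftrightarrow> (\<forall>x y t. 0 < t \<and> t < 1 \<longrightarrow>
      h (t *\<^sub>R x + (1 - t) *\<^sub>R y) \<le> ereal t * h x + ereal (1 - t) * h y)"

definition elsc :: "('a::topological_space \<Rightarrow> ereal) \<Rightarrow> bool" where
  "elsc h \<longleftrightarrow> (\<forall>x. h x \<le> Liminf (at x) h)"

end

theory Submission
  imports Defs
begin

(* For f z = 1/2 |y - z|^2 one has -f*(-theta) = h theta := y.theta - 1/2 |theta|^2, and since g is
   positively homogeneous its conjugate is the indicator of its set of linear minorants.  Hence D is
   h on the closed convex dual feasible set F = {theta. X^T theta minorizes g} and -infinity elsewhere,
   and weak duality h theta <= P beta on F is completing the square.  As
   h theta = 1/2 |y|^2 - 1/2 |y - theta|^2, the maximizer of D is the projection of y onto F, which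
   gives (theta~ - theta^) . (y - theta^) <= 0; the description of the sphere test region is the identity
     h theta - (1/2 |theta - theta~|^2 + h theta~) = - (theta~ - theta) . (y - theta). *)

lemma fconj_half_sq_dist_uminus:
  fixes y \<theta> :: "'a::real_inner"
  shows "fconj (\<lambda>z. ereal (1/2 * (norm (y - z))\<^sup>2)) (- \<theta>) = ereal (1/2 * (norm \<theta>)\<^sup>2 - \<theta> \<bullet> y)"
proof -
  have le: "ereal ((- \<theta>) \<bullet> z) - ereal (1/2 * (norm (y - z))\<^sup>2) \<le> ereal (1/2 * (norm \<theta>)\<^sup>2 - \<theta> \<bullet> y)"
    for z
  proof -
    have "1/2 * (norm (\<theta> + z - y))\<^sup>2 = 1/2 * (norm \<theta>)\<^sup>2 + \<theta> \<bullet> (z - y) + 1/2 * (norm (y - z))\<^sup>2"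
      by (simp add: power2_norm_eq_inner algebra_simps inner_commute)
    moreover have "0 \<le> 1/2 * (norm (\<theta> + z - y))\<^sup>2" by simp
    ultimately show ?thesis by (simp add: inner_diff_right)
  qed
  have attained: "ereal ((- \<theta>) \<bullet> (y - \<theta>)) - ereal (1/2 * (norm (y - (y - \<theta>)))\<^sup>2)
      = ereal (1/2 * (norm \<theta>)\<^sup>2 - \<theta> \<bullet> y)"
    by (simp add: power2_norm_eq_inner algebra_simps inner_commute)
  show ?thesis unfolding fconj_def
    by (rule antisym, rule SUP_least, rule le, subst attained[symmetric], rule SUP_upper, simp)
qed

definition linear_minorants :: "('a::real_inner \<Rightarrow> ereal) \<Rightarrow> 'a set" where
  "linear_minorants g = {v. \<forall>z. ereal (v \<bullet> z) \<le> g z}"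

lemma fconj_positively_homogeneous:
  fixes g :: "'a::real_inner \<Rightarrow> ereal"
  assumes not_minf: "\<And>z. g z \<noteq> -\<infinity>"
    and hom: "\<And>k z. k \<ge> 0 \<Longrightarrow> g (k *\<^sub>R z) = ereal k * g z"
  shows "fconj g v = (if v \<in> linear_minorants g then 0 else \<infinity>)"
proof (cases "v \<in> linear_minorants g")
  case True
  have "g 0 = ereal 0 * g 0" using hom[of 0 0] by simp
  then have g0: "g 0 = 0" by (simp add: zero_ereal_def[symmetric])
  have "(SUP z. ereal (v \<bullet> z) - g z) = 0"
  proof (rule antisym)
    show "(SUP z. ereal (v \<bullet> z) - g z) \<le> 0"
    proof (rule SUP_least)
      fix z
      have "ereal (v \<bullet> z) \<le> g z" using True unfolding linear_minorants_def by blast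
      then show "ereal (v \<bullet> z) - g z \<le> 0" using not_minf[of z] by (cases "g z") auto
    qed
    have "0 = ereal (v \<bullet> 0) - g 0" using g0 by simp
    also have "\<dots> \<le> (SUP z. ereal (v \<bullet> z) - g z)" by (rule SUP_upper) simp
    finally show "0 \<le> (SUP z. ereal (v \<bullet> z) - g z)" .
  qed
  then show ?thesis using True by (simp add: fconj_def)
next
  case False
  then obtain z where "g z < ereal (v \<bullet> z)" by (auto simp: linear_minorants_def not_le)
  moreover from this obtain r where "g z = ereal r" using not_minf[of z] by (cases "g z") auto
  ultimately have z: "g z = ereal r" "r < v \<bullet> z" by auto
  \<comment> \<open>scaling the violated inequality at z makes the gap v.z - g z arbitrarily large\<close>
  have "fconj g v = \<infinity>"
  proof (rule ereal_top)
    fix B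
    define k where "k = \<bar>B\<bar> / (v \<bullet> z - r)"
    have k: "k \<ge> 0" "B \<le> k * (v \<bullet> z - r)" using z by (simp_all add: k_def)
    then have "ereal B \<le> ereal (v \<bullet> (k *\<^sub>R z)) - g (k *\<^sub>R z)"
      using hom[of k z] z by (simp add: algebra_simps)
    also have "\<dots> \<le> fconj g v" unfolding fconj_def by (rule SUP_upper) simp
    finally show "ereal B \<le> fconj g v" .
  qed
  then show ?thesis using False by simp
qed

lemma closed_convex_ereal_halfspace:
  fixes z :: "'a::real_inner"
  shows "closed {v. ereal (v \<bullet> z) \<le> c} \<and> convex {v. ereal (v \<bullet> z) \<le> c}"
proof (cases c)
  case (real r)
  then have "{v. ereal (v \<bullet> z) \<le> c} = {v. z \<bullet> v \<le> r}" by (simp add: inner_commute)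
  then show ?thesis using closed_halfspace_le convex_halfspace_le by metis
qed simp_all

lemma closed_linear_minorants: "closed (linear_minorants g)"
  unfolding linear_minorants_def Collect_all_eq
  using closed_convex_ereal_halfspace by (intro closed_INT) blast

lemma convex_linear_minorants: "convex (linear_minorants g)"
  unfolding linear_minorants_def Collect_all_eq
  using closed_convex_ereal_halfspace by (intro convex_INT) blast

lemma least_squares_weak_duality:
  fixes X :: "real ^ 'd ^ 'n" and y \<theta> :: "real ^ 'n"
  assumes "transpose X *v \<theta> \<in> linear_minorants g"
  shows "ereal (y \<bullet> \<theta> - 1/2 * (norm \<theta>)\<^sup>2) \<le> ereal (1/2 * (norm (y - X *v \<beta>))\<^sup>2) + g \<beta>"
proof -
  have "1/2 * (norm (y - X *v \<beta> - \<theta>))\<^sup>2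
      = 1/2 * (norm (y - X *v \<beta>))\<^sup>2 + \<theta> \<bullet> (X *v \<beta>) - (y \<bullet> \<theta> - 1/2 * (norm \<theta>)\<^sup>2)"
    unfolding power2_norm_eq_inner
    by (simp add: inner_diff_left inner_diff_right algebra_simps inner_commute)
  then have "y \<bullet> \<theta> - 1/2 * (norm \<theta>)\<^sup>2 \<le> 1/2 * (norm (y - X *v \<beta>))\<^sup>2 + \<theta> \<bullet> (X *v \<beta>)"
    using zero_le_power2[of "norm (y - X *v \<beta> - \<theta>)"] by linarith
  then have "ereal (y \<bullet> \<theta> - 1/2 * (norm \<theta>)\<^sup>2)
      \<le> ereal (1/2 * (norm (y - X *v \<beta>))\<^sup>2) + ereal ((transpose X *v \<theta>) \<bullet> \<beta>)"
    by (simp add: dot_lmul_matrix)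
  also have "\<dots> \<le> ereal (1/2 * (norm (y - X *v \<beta>))\<^sup>2) + g \<beta>"
    using assms unfolding linear_minorants_def by (intro add_left_mono) simp
  finally show ?thesis .
qed

lemma maximizer_half_sq_inner_le:
  fixes y :: "'a::real_inner"
  assumes "convex S" "closed S" "x \<in> S" "b \<in> S"
    and max: "\<And>z. z \<in> S \<Longrightarrow> y \<bullet> z - 1/2 * (norm z)\<^sup>2 \<le> y \<bullet> x - 1/2 * (norm x)\<^sup>2"
  shows "(b - x) \<bullet> (y - x) \<le> 0"
proof -
  have half_sq: "y \<bullet> z - 1/2 * (norm z)\<^sup>2 = 1/2 * (norm y)\<^sup>2 - 1/2 * (dist y z)\<^sup>2" for z
    unfolding dist_norm power2_norm_eq_inner
    by (simp add: inner_diff_left inner_diff_right inner_commute field_simps)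
  have "\<forall>z\<in>S. dist y x \<le> dist y z"
    using max unfolding half_sq by (simp add: power2_le_iff_abs_le)
  then have "(y - x) \<bullet> (b - x) \<le> 0" by (rule any_closest_point_dot[OF assms(1-4)])
  then show ?thesis by (simp add: inner_commute)
qed

lemma half_sq_gap_eq_inner:
  fixes y \<theta> \<theta>' :: "'a::real_inner"
  shows "(y \<bullet> \<theta> - 1/2 * (norm \<theta>)\<^sup>2) - (1/2 * (norm (\<theta> - \<theta>'))\<^sup>2 + (y \<bullet> \<theta>' - 1/2 * (norm \<theta>')\<^sup>2))
    = - ((\<theta>' - \<theta>) \<bullet> (y - \<theta>))"
  unfolding power2_norm_eq_inner
  by (simp add: inner_diff_left inner_diff_right algebra_simps inner_commute)

theorem theorem9:
  fixes X :: "real ^ 'd ^ 'n" and y :: "real ^ 'n"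
    and g :: "real ^ 'd \<Rightarrow> ereal"
    and f :: "real ^ 'n \<Rightarrow> ereal"
    and P :: "real ^ 'd \<Rightarrow> ereal"
    and D :: "real ^ 'n \<Rightarrow> ereal"
    and uGM :: "real ^ 'n \<Rightarrow> real ^ 'd \<Rightarrow> ereal"
    and l :: "real ^ 'n \<Rightarrow> real ^ 'n \<Rightarrow> ereal"
    and theta_hat :: "real ^ 'n"
  assumes g_proper: "eproper g" and g_lsc: "elsc g" and g_convex: "econvex g"
    and g_hom: "\<And>k \<beta>. k \<ge> 0 \<Longrightarrow> g (k *\<^sub>R \<beta>) = ereal k * g \<beta>"
    and relint_ne: "\<exists>\<beta>. \<beta> \<in> rel_interior (edom g)"
    and P_def: "\<And>\<beta>. P \<beta> = ereal (1/2 * (norm (y - X *v \<beta>))\<^sup>2) + g \<beta>"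
    and P_attains: "\<exists>\<beta>0. \<forall>\<beta>. P \<beta>0 \<le> P \<beta>"
    and f_def: "\<And>z. f z = ereal (1/2 * (norm (y - z))\<^sup>2)"
    and D_def: "\<And>\<theta>. D \<theta> = - fconj f (- \<theta>) - fconj g (transpose X *v \<theta>)"
    and theta_hat_max: "\<And>\<theta>. D \<theta> \<le> D theta_hat"
    and uGM_def: "\<And>\<theta> \<beta>t. uGM \<theta> \<beta>t =
        (if - fconj f (- \<theta>) \<le> P \<beta>t then - fconj f (- \<theta>) else -\<infinity>)"
    and l_def: "\<And>\<theta> \<theta>t. l \<theta> \<theta>t = ereal (1/2 * (norm (\<theta> - \<theta>t))\<^sup>2) + D \<theta>t"
  shows "\<forall>\<beta>t \<theta>t. \<theta>t \<in> edom D \<longrightarrow>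
           (\<forall>\<theta>. D \<theta> \<le> uGM \<theta> \<beta>t)
         \<and> theta_hat \<in> {\<theta>. l \<theta> \<theta>t \<le> uGM \<theta> \<beta>t}
         \<and> {\<theta>. l \<theta> \<theta>t \<le> uGM \<theta> \<beta>t}
             = {\<theta>. - fconj f (- \<theta>) \<le> P \<beta>t \<and> (\<theta>t - \<theta>) \<bullet> (y - \<theta>) \<le> 0}"
proof (intro allI impI)
  fix \<beta>t \<theta>t
  assume \<theta>t_dom: "\<theta>t \<in> edom D"
  define h where "h \<theta> = y \<bullet> \<theta> - 1/2 * (norm \<theta>)\<^sup>2" for \<theta> :: "real ^ 'n"
  define F where "F = (\<lambda>\<theta>. transpose X *v \<theta>) -` linear_minorants g"
  have F: "convex F" "closed F"
    unfolding F_def using convex_linear_minorants closed_linear_minorants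
    by (auto intro: convex_linear_vimage continuous_closed_vimage matrix_vector_mult_linear_continuous_at)
  have f_eq: "f = (\<lambda>z. ereal (1/2 * (norm (y - z))\<^sup>2))" using f_def by (rule ext)
  have dual_quad: "- fconj f (- \<theta>) = ereal (h \<theta>)" for \<theta>
    unfolding f_eq fconj_half_sq_dist_uminus by (simp add: h_def inner_commute)
  have "g z \<noteq> -\<infinity>" for z using g_proper by (simp add: eproper_def)
  then have D_eq: "D \<theta> = (if \<theta> \<in> F then ereal (h \<theta>) else -\<infinity>)" for \<theta>
    using D_def[of \<theta>] dual_quad[of \<theta>] by (simp add: fconj_positively_homogeneous g_hom F_def)
  have uGM_eq: "uGM \<theta> \<beta>t = (if ereal (h \<theta>) \<le> P \<beta>t then ereal (h \<theta>) else -\<infinity>)" for \<theta>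
    using uGM_def dual_quad by simp
  have weak_duality: "ereal (h \<theta>) \<le> P \<beta>t" if "\<theta> \<in> F" for \<theta>
    using least_squares_weak_duality[of X \<theta> g y \<beta>t] that by (simp add: F_def h_def P_def)
  have \<theta>t: "\<theta>t \<in> F" "D \<theta>t = ereal (h \<theta>t)"
    using \<theta>t_dom D_eq[of \<theta>t] unfolding edom_def by (auto split: if_splits)
  have theta_hat_F: "theta_hat \<in> F"
    using theta_hat_max[of \<theta>t] \<theta>t(2) D_eq[of theta_hat] by (auto split: if_splits)
  have theta_hat_max_h: "h \<theta> \<le> h theta_hat" if "\<theta> \<in> F" for \<theta>
    using theta_hat_max[of \<theta>] D_eq[of \<theta>] D_eq[of theta_hat] that theta_hat_F by simp
  have sphere_test: "ereal (1/2 * (norm (\<theta> - \<theta>t))\<^sup>2 + h \<theta>t) \<le> ereal (h \<theta>)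
      \<longleftrightarrow> (\<theta>t - \<theta>) \<bullet> (y - \<theta>) \<le> 0" for \<theta>
    unfolding ereal_less_eq h_def using half_sq_gap_eq_inner[of y \<theta> \<theta>t] by linarith
  have region: "{\<theta>. l \<theta> \<theta>t \<le> uGM \<theta> \<beta>t}
      = {\<theta>. - fconj f (- \<theta>) \<le> P \<beta>t \<and> (\<theta>t - \<theta>) \<bullet> (y - \<theta>) \<le> 0}"
    using sphere_test by (auto simp: l_def \<theta>t(2) uGM_eq dual_quad)
  have "(\<theta>t - theta_hat) \<bullet> (y - theta_hat) \<le> 0"
    using maximizer_half_sq_inner_le[OF F theta_hat_F \<theta>t(1)] theta_hat_max_h by (simp add: h_def)
  then show "(\<forall>\<theta>. D \<theta> \<le> uGM \<theta> \<beta>t) \<and> theta_hat \<in> {\<theta>. l \<theta> \<theta>t \<le> uGM \<theta> \<beta>t}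
      \<and> {\<theta>. l \<theta> \<theta>t \<le> uGM \<theta> \<beta>t}
        = {\<theta>. - fconj f (- \<theta>) \<le> P \<beta>t \<and> (\<theta>t - \<theta>) \<bullet> (y - \<theta>) \<le> 0}"
    using region weak_duality theta_hat_F by (simp add: D_eq uGM_eq dual_quad)
qed

end
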